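(* Let $\mathbb{F}$ be a field with $\mathrm{char}(\mathbb{F})\neq 2,3$, let $I$ be an ideal of $\hat{\mathcal{H}}$ with $I\subseteq J$, and let $x$ be a non-zero element of $I$ of minimal $J$-degree, with $p$-level $3k$. Then $x=\sum_{j\in 3\mathbb{N},\,j\le 3k}\beta_jp_{\bar1,j}$ for some $\beta_j\in\mathbb{F}$.
   Context: Notation: $\mathbb{N}=\{1,2,3,\dots\}$, $3\mathbb{N}=\{3,6,9,\dots\}$; for $r\in\mathbb{Z}$, $\bar r=r+3\mathbb{Z}\in\mathbb{Z}_3$. The algebra $\hat{\mathcal{H}}$ is the commutative $\mathbb{F}$-algebra with basis $\{a_i:i\in\mathbb{Z}\}\cup\{s_j:j\in\mathbb{N}\}\cup\{p_{\bar r,k}:\bar r\in\{\bar1,\bar2\},\ k\in 3\mathbb{N}\}$, where $s_0=0$, $p_{\bar r,j}=0$ for all $\bar r$ whenever $j\notin 3\mathbb{N}$, $p_{\bar 0,j}=-p_{\bar1,j}-p_{\bar2,j}$, $z_{\bar r,j}=p_{\bar r+\bar1,j}-p_{\bar r-\bar1,j}$, and for $i,i'\in\mathbb{Z}$, $j,l\in\mathbb{N}$, $h,k\in3\mathbb{N}$, $\bar r,\bar t\in\mathbb{Z}_3$: (H1) $a_ia_{i'}=\tfrac12(a_i+a_{i'})+s_{|i-i'|}+z_{\bar\imath,|i-i'|}$; (H2) $a_is_j=-\tfrac34a_i+\tfrac38(a_{i-j}+a_{i+j})+\tfrac32 s_j-z_{\bar\imath,j}$; (H3) $a_ip_{\bar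 r,k}=\tfrac32p_{\bar r,k}-p_{-(\bar\imath+\bar r),k}$; (H4) $s_js_l=\tfrac34(s_j+s_l)-\tfrac38(s_{|j-l|}+s_{j+l})$; (H5) $s_jp_{\bar r,k}=\tfrac34(p_{\bar r,j}+p_{\bar r,k})-\tfrac38(p_{\bar r,|j-k|}+p_{\bar r,j+k})$; (H6) $p_{\bar r,h}p_{\bar t,k}=\tfrac14(z_{-(\bar r+\bar t),h}+z_{-(\bar r+\bar t),k})-\tfrac18(z_{-(\bar r+\bar t),|h-k|}+z_{-(\bar r+\bar t),h+k})$. $J=\langle p_{\bar1,j},p_{\bar2,j}:j\in3\mathbb{N}\rangle$ (an ideal). Every non-zero $x\in J$ is uniquely $x=\sum_{j\in3\mathbb{N},\,j\le 3m}\sum_{\bar r\in\{\bar1,\bar2\}}\beta_{\bar r,j}p_{\bar r,j}$ with $\beta_{\bar r,3m}\neq0$ for some $\bar r$; its $p$-level is $3m$ and its $J$-degree is $3m+\sum_{r\in\{1,2\},\ \beta_{\bar r,3m}\neq0}\tfrac r4$. *)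

theory Defs
  imports Complex_Main
begin

text \<open>Basis indices of the algebra H-hat.  A i = a_i (i in Z), S j = s_j (j >= 1),
  P r k = p_{r,k} with r in {1,2} and k in 3N.  Indices outside these ranges
  are not basis elements (see hvalid).\<close>
datatype hb = A int | S nat | P nat nat

definition hvalid :: "hb \<Rightarrow> bool" where
  "hvalid b = (case b of A i \<Rightarrow> True | S j \<Rightarrow> 0 < j
      | P r k \<Rightarrow> (r = 1 \<or> r = 2) \<and> 0 < k \<and> 3 dvd k)"

text \<open>Elements of H-hat are coordinate functions w.r.t. the basis, finitely supported
  on valid indices.\<close>
type_synonym 'a hvec = "hb \<Rightarrow> 'a"

definition hcarrier :: "'a::field hvec set" where
  "hcarrier = {v. finite {b. v b \<noteq> 0} \<and> (\<forall>b. v b \<noteq> 0 \<longrightarrow> hvalid b)}"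

definition vzero :: "'a::field hvec" where "vzero = (\<lambda>b. 0)"
definition vadd :: "'a::field hvec \<Rightarrow> 'a hvec \<Rightarrow> 'a hvec" where
  "vadd u v = (\<lambda>b. u b + v b)"
definition vsub :: "'a::field hvec \<Rightarrow> 'a hvec \<Rightarrow> 'a hvec" where
  "vsub u v = (\<lambda>b. u b - v b)"
definition vscale :: "'a::field \<Rightarrow> 'a hvec \<Rightarrow> 'a hvec" where
  "vscale c v = (\<lambda>b. c * v b)"
definition vsum :: "('i \<Rightarrow> 'a::field hvec) \<Rightarrow> 'i set \<Rightarrow> 'a hvec" where
  "vsum f X = (\<lambda>b. \<Sum>i\<in>X. f i b)"

definition ebas :: "hb \<Rightarrow> 'a::field hvec" where
  "ebas b = (\<lambda>c. if c = b then 1 else 0)"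

text \<open>The generators with the conventions of the paper: s_0 = 0,
  p_{r,j} = 0 for j not in 3N, p_{0,j} = - p_{1,j} - p_{2,j}; the first index of p
  is an integer read modulo 3.\<close>
definition av :: "int \<Rightarrow> 'a::field hvec" where "av i = ebas (A i)"
definition sv :: "nat \<Rightarrow> 'a::field hvec" where
  "sv j = (if j = 0 then vzero else ebas (S j))"
definition pv :: "int \<Rightarrow> nat \<Rightarrow> 'a::field hvec" where
  "pv r j = (if 0 < j \<and> 3 dvd j then
      (if r mod 3 = 1 then ebas (P 1 j)
       else if r mod 3 = 2 then ebas (P 2 j)
       else vsub (vscale (-1) (ebas (P 1 j))) (ebas (P 2 j)))
     else vzero)"
definition zv :: "int \<Rightarrow> nat \<Rightarrow> 'a::field hvec" where
  "zv r j = vsub (pv (r + 1) j) (pv (r - 1) j)"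

definition adist :: "int \<Rightarrow> int \<Rightarrow> nat" where "adist i i' = nat \<bar>i - i'\<bar>"
definition ndist :: "nat \<Rightarrow> nat \<Rightarrow> nat" where "ndist j l = nat \<bar>int j - int l\<bar>"

text \<open>Products of basis elements, (H1)-(H6) and commutativity.\<close>
fun bprod :: "hb \<Rightarrow> hb \<Rightarrow> 'a::field hvec" where
  "bprod (A i) (A i') = vadd (vadd (vscale (1/2) (vadd (av i) (av i'))) (sv (adist i i')))
        (zv i (adist i i'))"
| "bprod (A i) (S j) = vadd (vadd (vadd (vscale (-3/4) (av i))
        (vscale (3/8) (vadd (av (i - int j)) (av (i + int j)))))
        (vscale (3/2) (sv j))) (vscale (-1) (zv i j))"
| "bprod (S j) (A i) = vadd (vadd (vadd (vscale (-3/4) (av i))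
        (vscale (3/8) (vadd (av (i - int j)) (av (i + int j)))))
        (vscale (3/2) (sv j))) (vscale (-1) (zv i j))"
| "bprod (A i) (P r k) = vsub (vscale (3/2) (pv (int r) k)) (pv (- (i + int r)) k)"
| "bprod (P r k) (A i) = vsub (vscale (3/2) (pv (int r) k)) (pv (- (i + int r)) k)"
| "bprod (S j) (S l) = vsub (vscale (3/4) (vadd (sv j) (sv l)))
        (vscale (3/8) (vadd (sv (ndist j l)) (sv (j + l))))"
| "bprod (S j) (P r k) = vsub (vscale (3/4) (vadd (pv (int r) j) (pv (int r) k)))
        (vscale (3/8) (vadd (pv (int r) (ndist j k)) (pv (int r) (j + k))))"
| "bprod (P r k) (S j) = vsub (vscale (3/4) (vadd (pv (int r) j) (pv (int r) k)))
        (vscale (3/8) (vadd (pv (int r) (ndist j k)) (pv (int r) (j + k))))"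
| "bprod (P r h) (P t k) = vsub (vscale (1/4) (vadd (zv (- (int r + int t)) h) (zv (- (int r + int t)) k)))
        (vscale (1/8) (vadd (zv (- (int r + int t)) (ndist h k)) (zv (- (int r + int t)) (h + k))))"

definition hmult :: "'a::field hvec \<Rightarrow> 'a hvec \<Rightarrow> 'a hvec" where
  "hmult x y = vsum (\<lambda>b. vsum (\<lambda>c. vscale (x b * y c) (bprod b c)) {c. y c \<noteq> 0}) {b. x b \<noteq> 0}"

definition hideal :: "'a::field hvec set \<Rightarrow> bool" where
  "hideal I \<longleftrightarrow> I \<subseteq> hcarrier \<and> vzero \<in> I
     \<and> (\<forall>u\<in>I. \<forall>v\<in>I. vadd u v \<in> I)
     \<and> (\<forall>c. \<forall>u\<in>I. vscale c u \<in> I)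
     \<and> (\<forall>h\<in>hcarrier. \<forall>u\<in>I. hmult h u \<in> I)"

definition Jideal :: "'a::field hvec set" where
  "Jideal = \<Inter>{I. hideal I \<and> (\<forall>j. 0 < j \<and> 3 dvd j \<longrightarrow> pv 1 j \<in> I \<and> pv 2 j \<in> I)}"

definition plevel :: "'a::field hvec \<Rightarrow> nat" where
  "plevel x = Max {j. x (P 1 j) \<noteq> 0 \<or> x (P 2 j) \<noteq> 0}"

definition Jdegree :: "'a::field hvec \<Rightarrow> real" where
  "Jdegree x = real (plevel x)
     + (if x (P 1 (plevel x)) \<noteq> 0 then 1/4 else 0)
     + (if x (P 2 (plevel x)) \<noteq> 0 then 2/4 else 0)"

end

theory Submission
  imports Defs
begin

(* Multiplication by a_1 and by a_0 acts on each level j of an element of J separately,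
  through fixed 2x2 matrices on its coordinates x_1(j), x_2(j) at p_{1,j}, p_{2,j} (relation H3).
  Hence a_1 x - x/2, a_1 x - 5x/2 and a_0 x + x/2 lie in I, have p-level at most that of x,
  and have coordinates (x_2, 2 x_2), (x_2 - 2 x_1, 0) and (2 x_1 - x_2, 2 x_2 - x_1).
  If x_2 vanishes at the top level 3k but not everywhere, the first has p-level below 3k.
  Otherwise the J-degree of x is at least 3k + 1/2, so the second must vanish (its J-degree
  is at most 3k + 1/4), i.e. x_2 = 2 x_1; then the third is (0, 3 x_1), of J-degree 3k + 1/2,
  less than the J-degree 3k + 3/4 of x.  Both cases contradict minimality, so x_2 = 0. *)

definition pspan :: "'a::field hvec set" where
  "pspan = {v \<in> hcarrier. \<forall>b. v b \<noteq> 0 \<longrightarrow> (\<exists>r k. b = P r k)}"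

lemma pspan_nonzero_valid:
  assumes "x \<in> pspan" "x b \<noteq> 0"
  obtains r k where "b = P r k" "r = 1 \<or> r = 2" "0 < k" "3 dvd k"
proof -
  from assms obtain r k where "b = P r k" by (auto simp: pspan_def)
  moreover have "hvalid b" using assms by (auto simp: pspan_def hcarrier_def)
  ultimately show thesis using that by (simp add: hvalid_def)
qed

lemma vzero_in_pspan: "vzero \<in> pspan"
  by (simp add: pspan_def hcarrier_def vzero_def)

lemma vadd_in_pspan:
  assumes "u \<in> pspan" "v \<in> pspan"
  shows "vadd u v \<in> pspan"
proof -
  have "{b. vadd u v b \<noteq> 0} \<subseteq> {b. u b \<noteq> 0} \<union> {b. v b \<noteq> 0}"
    by (auto simp: vadd_def)
  moreover have "finite ({b. u b \<noteq> 0} \<union> {b. v b \<noteq> 0})"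
    using assms by (simp add: pspan_def hcarrier_def)
  ultimately show ?thesis
    using assms by (auto simp: pspan_def hcarrier_def vadd_def intro: finite_subset)
qed

lemma vscale_in_pspan:
  assumes "v \<in> pspan"
  shows "vscale c v \<in> pspan"
proof -
  have "{b. vscale c v b \<noteq> 0} \<subseteq> {b. v b \<noteq> 0}"
    by (auto simp: vscale_def)
  then show ?thesis
    using assms by (auto simp: pspan_def hcarrier_def vscale_def intro: finite_subset)
qed

lemma vsub_in_pspan: "u \<in> pspan \<Longrightarrow> v \<in> pspan \<Longrightarrow> vsub u v \<in> pspan"
  using vadd_in_pspan[OF _ vscale_in_pspan, of u v "-1"]
  by (simp add: vsub_def vadd_def vscale_def)

lemma vsum_in_pspan:
  assumes "\<And>i. i \<in> X \<Longrightarrow> f i \<in> pspan"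
  shows "vsum f X \<in> pspan"
proof (cases "finite X")
  case True
  then show ?thesis
    using assms
  proof (induction X rule: finite_induct)
    case empty
    then show ?case by (simp add: vsum_def vzero_in_pspan flip: vzero_def)
  next
    case (insert i X)
    have "vsum f (insert i X) = vadd (f i) (vsum f X)"
      using insert.hyps by (simp add: vsum_def vadd_def)
    then show ?case using insert by (simp add: vadd_in_pspan)
  qed
next
  case False
  then show ?thesis by (simp add: vsum_def vzero_in_pspan flip: vzero_def)
qed

lemma ebas_in_pspan:
  assumes "hvalid (P r k)"
  shows "ebas (P r k) \<in> pspan"
proof -
  have "{b. (ebas (P r k) :: 'a hvec) b \<noteq> 0} = {P r k}" by (auto simp: ebas_def)
  then show ?thesis using assms by (auto simp: pspan_def hcarrier_def ebas_def)
qed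

lemma pv_in_pspan: "pv r j \<in> pspan"
  by (simp add: pv_def hvalid_def ebas_in_pspan vzero_in_pspan vsub_in_pspan vscale_in_pspan)

lemma zv_in_pspan: "zv r j \<in> pspan"
  by (simp add: zv_def vsub_in_pspan pv_in_pspan)

lemma bprod_P_in_pspan: "bprod b (P r k) \<in> pspan"
  by (cases b) (simp_all add: vadd_in_pspan vsub_in_pspan vscale_in_pspan pv_in_pspan zv_in_pspan)

lemma hmult_in_pspan:
  assumes "u \<in> pspan"
  shows "hmult h u \<in> pspan"
  unfolding hmult_def
proof (intro vsum_in_pspan vscale_in_pspan)
  fix c assume "c \<in> {c. u c \<noteq> 0}"
  then obtain r k where "c = P r k" using assms by (auto simp: pspan_def)
  then show "bprod b c \<in> pspan" for b by (simp add: bprod_P_in_pspan)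
qed

lemma hideal_pspan: "hideal pspan"
  unfolding hideal_def
  by (auto simp: vzero_in_pspan vadd_in_pspan vscale_in_pspan hmult_in_pspan)
    (simp add: pspan_def)

lemma Jideal_subset_pspan: "Jideal \<subseteq> pspan"
  unfolding Jideal_def using hideal_pspan pv_in_pspan by (intro Inter_lower) blast

lemma hmult_av_apply: "hmult (av i) x c = (\<Sum>c'\<in>{c. x c \<noteq> 0}. x c' * bprod (A i) c' c)"
proof -
  have "{b. (av i :: 'a::field hvec) b \<noteq> 0} = {A i}" by (auto simp: av_def ebas_def)
  then show ?thesis by (simp add: hmult_def vsum_def vscale_def av_def ebas_def)
qed

lemma bprod_A_P_apply_other_level: "k \<noteq> j \<Longrightarrow> bprod (A i) (P r k) (P t j) = 0"
  by (simp add: pv_def ebas_def vsub_def vscale_def vzero_def)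

lemma hmult_av_P_apply:
  assumes "x \<in> pspan"
  shows "hmult (av i) x (P r j) =
    x (P 1 j) * bprod (A i) (P 1 j) (P r j) + x (P 2 j) * bprod (A i) (P 2 j) (P r j)"
proof -
  define f where "f c = x c * bprod (A i) c (P r j)" for c
  define S where "S = {c. x c \<noteq> 0}"
  define T where "T = {P 1 j, P 2 j}"
  have fin: "finite (S \<union> T)"
    using assms by (simp add: S_def T_def pspan_def hcarrier_def)
  have "f c = 0" if "c \<in> S - T" for c
  proof -
    have "x c \<noteq> 0" using that by (simp add: S_def)
    then obtain r' k where "c = P r' k" "r' = 1 \<or> r' = 2"
      using assms by (blast elim: pspan_nonzero_valid)
    with that have "k \<noteq> j" by (auto simp: T_def)
    then show ?thesis
      unfolding f_def \<open>c = P r' k\<close> bprod_A_P_apply_other_level[OF \<open>k \<noteq> j\<close>] by simp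
  qed
  then have "sum f S = sum f (S \<union> T)"
    by (intro sum.mono_neutral_left fin) (auto simp: f_def S_def)
  also have "\<dots> = sum f T"
    using \<open>\<And>c. c \<in> S - T \<Longrightarrow> f c = 0\<close> by (intro sum.mono_neutral_right fin) auto
  finally show ?thesis by (simp add: hmult_av_apply f_def S_def T_def)
qed

lemma pspan_apply_invalid_level:
  assumes "x \<in> pspan" "\<not> (0 < j \<and> 3 dvd j)"
  shows "x (P r j) = 0"
  using assms by (metis hb.inject(3) pspan_nonzero_valid)

(* (H3) read modulo 3: a_1 p_1 = p_1/2, a_1 p_2 = p_1 + 5/2 p_2, a_0 p_1 = 3/2 p_1 - p_2,
  a_0 p_2 = 3/2 p_2 - p_1. *)
lemma
  fixes x :: "'a::field hvec"
  assumes "x \<in> pspan" and char2: "(2::'a) \<noteq> 0"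
  shows hmult_av1_P1: "hmult (av 1) x (P 1 j) = x (P 1 j) / 2 + x (P 2 j)"
    and hmult_av1_P2: "hmult (av 1) x (P 2 j) = 5/2 * x (P 2 j)"
    and hmult_av0_P1: "hmult (av 0) x (P 1 j) = 3/2 * x (P 1 j) - x (P 2 j)"
    and hmult_av0_P2: "hmult (av 0) x (P 2 j) = 3/2 * x (P 2 j) - x (P 1 j)"
  using assms pspan_apply_invalid_level[OF assms(1)]
  by (cases "0 < j \<and> 3 dvd j";
      simp add: hmult_av_P_apply pv_def ebas_def vsub_def vscale_def field_simps)+

definition level_weight :: "'a::field hvec \<Rightarrow> nat \<Rightarrow> real" where
  "level_weight y N = (if y (P 1 N) \<noteq> 0 then 1/4 else 0) + (if y (P 2 N) \<noteq> 0 then 1/2 else 0)"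

lemma Jdegree_eq: "Jdegree y = real (plevel y) + level_weight y (plevel y)"
  by (simp add: Jdegree_def level_weight_def)

lemma levels_finite:
  assumes "y \<in> hcarrier"
  shows "finite {j. y (P 1 j) \<noteq> 0 \<or> y (P 2 j) \<noteq> 0}"
proof -
  have "finite (P r -` {b. y b \<noteq> 0})" for r
    using assms by (intro finite_vimageI) (auto simp: hcarrier_def inj_on_def)
  then have "finite (P 1 -` {b. y b \<noteq> 0} \<union> P 2 -` {b. y b \<noteq> 0})" by blast
  then show ?thesis by (rule finite_subset[rotated]) auto
qed

lemma above_plevel_zero:
  assumes "y \<in> hcarrier" "plevel y < j"
  shows "y (P 1 j) = 0" "y (P 2 j) = 0"
  using assms Max_ge[OF levels_finite[OF assms(1)], of j] by (force simp: plevel_def)+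

lemma Jdegree_le_bound:
  fixes y :: "'a::field hvec"
  assumes bound: "\<forall>j>N. y (P 1 j) = 0 \<and> y (P 2 j) = 0"
    and nz: "y (P 1 j0) \<noteq> 0 \<or> y (P 2 j0) \<noteq> 0"
  shows "Jdegree y \<le> real N + level_weight y N"
proof -
  define L where "L = {j. y (P 1 j) \<noteq> 0 \<or> y (P 2 j) \<noteq> 0}"
  have "L \<subseteq> {..N}" using bound by (auto simp: L_def not_less[symmetric])
  moreover have "j0 \<in> L" using nz by (simp add: L_def)
  ultimately have "plevel y \<le> N" unfolding plevel_def L_def[symmetric]
    using finite_subset[OF _ finite_atMost] by (subst Max_le_iff) auto
  show ?thesis
  proof (cases "plevel y = N")
    case True
    then show ?thesis by (simp add: Jdegree_eq)
  next
    case False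
    with \<open>plevel y \<le> N\<close> have "real (plevel y) \<le> real N - 1" by linarith
    then show ?thesis by (simp add: Jdegree_eq level_weight_def)
  qed
qed

locale minimal_Jdegree =
  fixes I :: "'a::field hvec set" and x :: "'a hvec"
  assumes char2: "(2::'a) \<noteq> 0"
    and I_ideal: "hideal I" and I_subset_pspan: "I \<subseteq> pspan"
    and x_mem: "x \<in> I"
    and minimal: "\<forall>y\<in>I. y \<noteq> vzero \<longrightarrow> Jdegree x \<le> Jdegree y"
begin

lemma char4: "(4::'a) \<noteq> 0"
  using char2 by (metis mult_2_right no_zero_divisors numeral_Bit0)

lemma x_pspan: "x \<in> pspan"
  using x_mem I_subset_pspan by blast

lemma above_plevel_x_zero:
  assumes "plevel x < j"
  shows "x (P 1 j) = 0" "x (P 2 j) = 0"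
  using above_plevel_zero[OF _ assms] x_pspan by (auto simp: pspan_def)

lemma av_combination_mem: "vadd (hmult (av i) x) (vscale c x) \<in> I"
proof -
  have "av i \<in> hcarrier"
    by (auto simp: hcarrier_def hvalid_def av_def ebas_def)
  then show ?thesis
    using I_ideal x_mem unfolding hideal_def by blast
qed

lemma Jdegree_le_of_mem:
  assumes "y \<in> I" "\<forall>j>N. y (P 1 j) = 0 \<and> y (P 2 j) = 0"
    and "y (P 1 j0) \<noteq> 0 \<or> y (P 2 j0) \<noteq> 0"
  shows "Jdegree x \<le> real N + level_weight y N"
proof -
  have "y \<noteq> vzero" using assms(3) by (auto simp: vzero_def)
  then have "Jdegree x \<le> Jdegree y" using minimal assms(1) by blast
  also have "\<dots> \<le> real N + level_weight y N" using assms(2,3) by (rule Jdegree_le_bound)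
  finally show ?thesis .
qed

lemma P2_eq_twice_P1:
  assumes top: "x (P 2 (plevel x)) \<noteq> 0"
  shows "x (P 2 j) = 2 * x (P 1 j)"
proof (rule ccontr)
  define K where "K = plevel x"
  assume "x (P 2 j) \<noteq> 2 * x (P 1 j)"
  define y where "y = vadd (hmult (av 1) x) (vscale (-5/2) x)"
  have y1: "y (P 1 m) = x (P 2 m) - 2 * x (P 1 m)" and y2: "y (P 2 m) = 0" for m
    unfolding y_def vadd_def vscale_def hmult_av1_P1[OF x_pspan char2] hmult_av1_P2[OF x_pspan char2]
    using char2 char4 by (simp_all add: field_simps)
  have "y \<in> I" unfolding y_def by (rule av_combination_mem)
  moreover have "\<forall>m>K. y (P 1 m) = 0 \<and> y (P 2 m) = 0"
    using above_plevel_x_zero y1 y2 by (simp add: K_def)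
  moreover have "y (P 1 j) \<noteq> 0" unfolding y1 using \<open>x (P 2 j) \<noteq> 2 * x (P 1 j)\<close> by simp
  ultimately have "Jdegree x \<le> real K + level_weight y K" by (blast intro: Jdegree_le_of_mem)
  then show False using top y2 by (simp add: Jdegree_eq level_weight_def K_def split: if_splits)
qed

lemma P2_top_zero:
  assumes char3: "(3::'a) \<noteq> 0"
  shows "x (P 2 (plevel x)) = 0"
proof (rule ccontr)
  define K where "K = plevel x"
  assume top_level: "x (P 2 (plevel x)) \<noteq> 0"
  then have top: "x (P 2 K) \<noteq> 0" by (simp add: K_def)
  have twice: "x (P 2 m) = 2 * x (P 1 m)" for m using top_level by (rule P2_eq_twice_P1)
  define z where "z = vadd (hmult (av 0) x) (vscale (1/2) x)"
  have z1: "z (P 1 m) = 0" and z2: "z (P 2 m) = 3 * x (P 1 m)" for m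
    unfolding z_def vadd_def vscale_def hmult_av0_P1[OF x_pspan char2] hmult_av0_P2[OF x_pspan char2]
    using char2 char4 twice[of m] by (simp_all add: field_simps)
  have "x (P 1 K) \<noteq> 0" using top twice[of K] by simp
  have "z \<in> I" unfolding z_def by (rule av_combination_mem)
  moreover have "\<forall>m>K. z (P 1 m) = 0 \<and> z (P 2 m) = 0"
    using above_plevel_x_zero z1 z2 by (simp add: K_def)
  moreover have "z (P 2 K) \<noteq> 0" using \<open>x (P 1 K) \<noteq> 0\<close> char3 by (simp add: z2)
  ultimately have "Jdegree x \<le> real K + level_weight z K" by (blast intro: Jdegree_le_of_mem)
  then show False
    using top \<open>x (P 1 K) \<noteq> 0\<close> char3 z1 z2 by (simp add: Jdegree_eq level_weight_def K_def)
qed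

lemma P2_zero:
  assumes char3: "(3::'a) \<noteq> 0"
  shows "x (P 2 j) = 0"
proof (rule ccontr)
  define K where "K = plevel x"
  assume "x (P 2 j) \<noteq> 0"
  moreover have "x (P 2 K) = 0" using P2_top_zero[OF char3] by (simp add: K_def)
  ultimately have "j < K"
    using above_plevel_x_zero(2)[of j] unfolding K_def by (metis linorder_neqE_nat)
  define y where "y = vadd (hmult (av 1) x) (vscale (-1/2) x)"
  have y1: "y (P 1 m) = x (P 2 m)" and y2: "y (P 2 m) = 2 * x (P 2 m)" for m
    unfolding y_def vadd_def vscale_def hmult_av1_P1[OF x_pspan char2] hmult_av1_P2[OF x_pspan char2]
    using char2 char4 by (simp_all add: field_simps)
  have "x (P 2 m) = 0" if "K - 1 < m" for m
  proof (cases "m = K")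
    case False
    with that \<open>j < K\<close> have "plevel x < m" by (simp add: K_def)
    then show ?thesis by (rule above_plevel_x_zero)
  qed (simp add: \<open>x (P 2 K) = 0\<close>)
  then have "\<forall>m>K - 1. y (P 1 m) = 0 \<and> y (P 2 m) = 0" using y1 y2 by simp
  moreover have "y \<in> I" unfolding y_def by (rule av_combination_mem)
  moreover have "y (P 1 j) \<noteq> 0" unfolding y1 by fact
  ultimately have "Jdegree x \<le> real (K - 1) + level_weight y (K - 1)"
    by (blast intro: Jdegree_le_of_mem)
  moreover have "real (K - 1) = real K - 1" using \<open>j < K\<close> by simp
  ultimately show False by (simp add: Jdegree_eq level_weight_def K_def split: if_splits)
qed

end

lemma pspan_eq_vsum_pv1:
  assumes "x \<in> pspan" and P2: "\<And>j. x (P 2 j) = 0" and above: "\<And>j. N < j \<Longrightarrow> x (P 1 j) = 0"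
  shows "x = vsum (\<lambda>j. vscale (x (P 1 j)) (pv 1 j)) {j. 0 < j \<and> 3 dvd j \<and> j \<le> N}"
    (is "x = vsum _ ?Js")
proof
  fix b
  have "vsum (\<lambda>j. vscale (x (P 1 j)) (pv 1 j)) ?Js b = (\<Sum>j\<in>?Js. if b = P 1 j then x b else 0)"
    unfolding vsum_def vscale_def by (intro sum.cong) (auto simp: pv_def ebas_def)
  also have "\<dots> = x b"
  proof (cases "\<exists>m\<in>?Js. b = P 1 m")
    case True
    then obtain m where "m \<in> ?Js" "b = P 1 m" by blast
    moreover have "finite ?Js" by (rule finite_subset[of _ "{..N}"]) auto
    ultimately show ?thesis by (simp add: sum.delta)
  next
    case False
    have "x b = 0"
    proof (rule ccontr)
      assume "x b \<noteq> 0"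
      with assms(1) obtain r k where "b = P r k" "r = 1 \<or> r = 2" "0 < k" "3 dvd k"
        by (rule pspan_nonzero_valid)
      with \<open>x b \<noteq> 0\<close> P2 above False show False by (fastforce simp: not_less[symmetric])
    qed
    with False show ?thesis by (auto intro: sum.neutral)
  qed
  finally show "x b = vsum (\<lambda>j. vscale (x (P 1 j)) (pv 1 j)) ?Js b" ..
qed

theorem lemma7p4:
  fixes I :: "'a::field hvec set" and x :: "'a hvec" and k :: nat
  assumes char2: "(2::'a) \<noteq> 0" and char3: "(3::'a) \<noteq> 0"
    and I: "hideal I" and IJ: "I \<subseteq> Jideal"
    and xI: "x \<in> I" and xnz: "x \<noteq> vzero"
    and xmin: "\<forall>y\<in>I. y \<noteq> vzero \<longrightarrow> Jdegree x \<le> Jdegree y"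
    and lev: "plevel x = 3 * k"
  shows "\<exists>\<beta>::nat \<Rightarrow> 'a. x = vsum (\<lambda>j. vscale (\<beta> j) (pv 1 j)) {j. 0 < j \<and> 3 dvd j \<and> j \<le> 3 * k}"
proof -
  interpret minimal_Jdegree I x
    using char2 I IJ Jideal_subset_pspan xI xmin by unfold_locales auto
  have "x = vsum (\<lambda>j. vscale (x (P 1 j)) (pv 1 j)) {j. 0 < j \<and> 3 dvd j \<and> j \<le> 3 * k}"
    using above_plevel_x_zero(1) lev by (intro pspan_eq_vsum_pv1 x_pspan P2_zero char3) auto
  then show ?thesis by (rule exI[of _ "\<lambda>j. x (P 1 j)"])
qed

end
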